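(* Unambiguous NPWs are not Büchi-type with respect to DBW-realizable languages: there exists an unambiguous nondeterministic parity word automaton $\mathcal{A}=\langle\Sigma,Q,Q_0,\delta,\alpha\rangle$ such that $L(\mathcal{A})$ is recognized by some deterministic Büchi word automaton, yet there is no set $\alpha'\subseteq Q$ such that the Büchi automaton $\langle\Sigma,Q,Q_0,\delta,\alpha'\rangle$ recognizes $L(\mathcal{A})$.
   Context: An automaton $\langle\Sigma,Q,Q_0,\delta,\alpha\rangle$ has transition function $\delta:Q\times\Sigma\to2^Q$; a run on $w=a_1a_2\cdots$ is $r_0r_1\cdots$ with $r_0\in Q_0$, $r_{i+1}\in\delta(r_i,a_{i+1})$. Parity condition: $\alpha:Q\to\{0,\ldots,k\}$, a run is accepting iff the least priority of a state visited infinitely often is even. Büchi condition: $\alpha\subseteq Q$, a run is accepting iff it visits $\alpha$ infinitely often. An automaton is deterministic if $|Q_0|=1$ and $|\delta(q,a)|\le1$ for all $q,a$, and unambiguous if every accepted word has exactly one accepting run. NPW = nondeterministic parity word automaton; DBW = deterministic Büchi word automaton. *)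

theory Defs
  imports Main
begin

text \<open>Automaton structure <Sigma, Q, Q0, delta> (acceptance condition kept separate).
  Infinite words are functions nat => 'a; w i is the letter a_(i+1).\<close>

record ('a, 'q) automaton =
  alph   :: "'a set"
  states :: "'q set"
  init   :: "'q set"
  trans  :: "'q \<Rightarrow> 'a \<Rightarrow> 'q set"

definition well_formed :: "('a, 'q) automaton \<Rightarrow> bool" where
  "well_formed A \<longleftrightarrow> finite (alph A) \<and> finite (states A) \<and> init A \<subseteq> states A \<and>
     (\<forall>q\<in>states A. \<forall>a\<in>alph A. trans A q a \<subseteq> states A)"

definition is_word :: "('a, 'q) automaton \<Rightarrow> (nat \<Rightarrow> 'a) \<Rightarrow> bool" where
  "is_word A w \<longleftrightarrow> (\<forall>i. w i \<in> alph A)"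

definition is_run :: "('a, 'q) automaton \<Rightarrow> (nat \<Rightarrow> 'a) \<Rightarrow> (nat \<Rightarrow> 'q) \<Rightarrow> bool" where
  "is_run A w r \<longleftrightarrow> r 0 \<in> init A \<and> (\<forall>i. r (Suc i) \<in> trans A (r i) (w i))"

definition inf_visited :: "(nat \<Rightarrow> 'q) \<Rightarrow> 'q \<Rightarrow> bool" where
  "inf_visited r q \<longleftrightarrow> (\<exists>\<^sub>\<infinity>i. r i = q)"

definition parity_acc :: "('q \<Rightarrow> nat) \<Rightarrow> (nat \<Rightarrow> 'q) \<Rightarrow> bool" where
  "parity_acc \<alpha> r \<longleftrightarrow>
     (\<exists>q. inf_visited r q \<and> even (\<alpha> q) \<and> (\<forall>q'. inf_visited r q' \<longrightarrow> \<alpha> q \<le> \<alpha> q'))"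

definition buchi_acc :: "'q set \<Rightarrow> (nat \<Rightarrow> 'q) \<Rightarrow> bool" where
  "buchi_acc F r \<longleftrightarrow> (\<exists>q\<in>F. inf_visited r q)"

definition parity_lang :: "('a, 'q) automaton \<Rightarrow> ('q \<Rightarrow> nat) \<Rightarrow> (nat \<Rightarrow> 'a) set" where
  "parity_lang A \<alpha> = {w. is_word A w \<and> (\<exists>r. is_run A w r \<and> parity_acc \<alpha> r)}"

definition buchi_lang :: "('a, 'q) automaton \<Rightarrow> 'q set \<Rightarrow> (nat \<Rightarrow> 'a) set" where
  "buchi_lang A F = {w. is_word A w \<and> (\<exists>r. is_run A w r \<and> buchi_acc F r)}"

definition deterministic :: "('a, 'q) automaton \<Rightarrow> bool" where
  "deterministic A \<longleftrightarrow> card (init A) = 1 \<and> (\<forall>q a. card (trans A q a) \<le> 1 \<and> finite (trans A q a))"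

definition unambiguous_parity :: "('a, 'q) automaton \<Rightarrow> ('q \<Rightarrow> nat) \<Rightarrow> bool" where
  "unambiguous_parity A \<alpha> \<longleftrightarrow>
     (\<forall>w \<in> parity_lang A \<alpha>. \<exists>!r. is_run A w r \<and> parity_acc \<alpha> r)"

definition DBW_realizable :: "'a set \<Rightarrow> (nat \<Rightarrow> 'a) set \<Rightarrow> bool" where
  "DBW_realizable \<Sigma> L \<longleftrightarrow>
     (\<exists>(D :: ('a, nat) automaton) F. alph D = \<Sigma> \<and> well_formed D \<and> deterministic D \<and>
        F \<subseteq> states D \<and> buchi_lang D F = L)"

end

(*
  Letters are 0 and 1. On an initial 1 the automaton guesses one of two deterministic components.
  The pair component {1, 2} accepts iff eventually only 0s are read, and it dies on a 0 after an
  odd block of 1s. The block component {3, ..., 8} tracks the parity of the current block of 1s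
  and accepts iff it reads "nonempty even block, then 0" infinitely often (state 6) or it reads
  "odd block, then 0" once and afterwards infinitely many 0s (trap {7, 8}). While both runs
  live, every block of 1s is even, so the block run needs infinitely many 1s whereas the pair run
  needs finitely many: there is at most one accepting run. The language consists of the words
  that start with 0 and are accepted by the block component, or start with 1 and contain
  infinitely many 0s; a DBW recognises it. No Buchi condition on the same structure works:
  1^omega forces state 1 to be rejecting, 0^omega forces state 3 to be rejecting, and every run
  on 110^omega ends up in {1, 3}.
*)

theory Submission
  imports Defs "HOL-Library.Infinite_Set"
begin

primrec det_run :: "('q \<Rightarrow> 'a \<Rightarrow> 'q) \<Rightarrow> 'q \<Rightarrow> (nat \<Rightarrow> 'a) \<Rightarrow> nat \<Rightarrow> 'q" where
  "det_run \<delta> q w 0 = q"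
| "det_run \<delta> q w (Suc i) = \<delta> (det_run \<delta> q w i) (w i)"

lemma INFM_Suc_iff: "(\<exists>\<^sub>\<infinity>n. P (Suc n)) \<longleftrightarrow> (\<exists>\<^sub>\<infinity>n. P n)"
  using MOST_Suc_iff[of "\<lambda>n. \<not> P n"] by (simp flip: not_INFM)

lemma run_determined_from:
  assumes run: "\<And>i. r' (Suc i) \<in> \<delta> (r' i) (w i)" and start: "r' k = r k"
    and functional: "\<And>i. k \<le> i \<Longrightarrow> \<delta> (r i) (w i) \<subseteq> {r (Suc i)}"
    and "k \<le> n"
  shows "r' n = r n"
  using \<open>k \<le> n\<close>
proof (induction n rule: dec_induct)
  case base
  show ?case by (rule start)
next
  case (step i)
  then show ?case using run[of i] functional[of i] by auto
qed

lemma frequently_det_run_entry: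
  assumes "\<exists>\<^sub>\<infinity>i. Q (det_run \<delta> q w i)" and "\<And>p a. Q (\<delta> p a) \<Longrightarrow> P p a"
  shows "\<exists>\<^sub>\<infinity>i. P (det_run \<delta> q w i) (w i)"
proof -
  have "\<exists>\<^sub>\<infinity>i. Q (det_run \<delta> q w (Suc i))"
    using INFM_Suc_iff[of "\<lambda>i. Q (det_run \<delta> q w i)"] assms(1) by blast
  then show ?thesis by (rule INFM_mono) (simp add: assms(2))
qed

lemma inf_visited_imp_visited: "inf_visited r q \<Longrightarrow> \<exists>i. r i = q"
  unfolding inf_visited_def by (rule INFM_EX)

lemma parity_acc_if_inf_visited_zero:
  assumes "inf_visited r q" "\<alpha> q = 0"
  shows "parity_acc \<alpha> r"
  using assms unfolding parity_acc_def by (intro exI[of _ q]) simp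

lemma parity_acc_if_eventually_const:
  assumes "\<forall>\<^sub>\<infinity>i. r i = q" "even (\<alpha> q)"
  shows "parity_acc \<alpha> r"
proof -
  have "inf_visited r q"
    using assms(1) by (simp add: inf_visited_def MOST_INFM)
  moreover have "q' = q" if "inf_visited r q'" for q'
    using INFM_EX[OF INFM_conjI[OF that[unfolded inf_visited_def] assms(1)]] by blast
  ultimately show ?thesis
    using assms(2) unfolding parity_acc_def by blast
qed

lemma not_buchi_acc_if_eventually_in:
  assumes "\<forall>\<^sub>\<infinity>i. r i \<in> S" "F \<inter> S = {}"
  shows "\<not> buchi_acc F r"
proof
  assume "buchi_acc F r"
  then obtain q where "q \<in> F" "\<exists>\<^sub>\<infinity>i. r i = q"
    by (auto simp: buchi_acc_def inf_visited_def)
  from \<open>\<exists>\<^sub>\<infinity>i. r i = q\<close> assms(1) have "\<exists>\<^sub>\<infinity>i. r i = q \<and> r i \<in> S"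
    by (rule INFM_conjI)
  then have "q \<in> S"
    by (blast dest: INFM_EX)
  with \<open>q \<in> F\<close> assms(2) show False
    by blast
qed

lemma is_run_det_iff:
  assumes "init A = {q}" "\<And>p a. trans A p a = {\<delta> p a}"
  shows "is_run A w r \<longleftrightarrow> r = det_run \<delta> q w"
proof
  assume run: "is_run A w r"
  have "r n = det_run \<delta> q w n" for n
  proof (induction n)
    case 0
    then show ?case using run assms(1) by (simp add: is_run_def)
  next
    case (Suc n)
    then show ?case using run assms(2) by (simp add: is_run_def)
  qed
  then show "r = det_run \<delta> q w" ..
next
  assume "r = det_run \<delta> q w"
  then show "is_run A w r"
    using assms by (simp add: is_run_def)
qed

lemma buchi_lang_det:
  assumes "init A = {q}" "\<And>p a. trans A p a = {\<delta> p a}"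
  shows "buchi_lang A F = {w. is_word A w \<and> buchi_acc F (det_run \<delta> q w)}"
  unfolding buchi_lang_def using is_run_det_iff[OF assms] by simp

definition block_step :: "nat \<Rightarrow> nat \<Rightarrow> nat" where
  "block_step q x =
     (if q \<in> {7, 8} then (if x = 0 then 7 else 8)
      else if x = 0 then (if q = 4 then 7 else if q = 5 then 6 else 3)
      else if q = 4 then 5 else 4)"

text \<open>\<open>pair_step 2 0\<close> is junk: the automaton has no transition there, so \<open>pair_run w\<close> is a
  run only as long as that case does not occur.\<close>

definition pair_step :: "nat \<Rightarrow> nat \<Rightarrow> nat" where
  "pair_step q x = (if x = 1 \<and> q \<noteq> 2 then 2 else 1)"

definition upw_trans :: "nat \<Rightarrow> nat \<Rightarrow> nat set" where
  "upw_trans q x =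
     (if q = 0 \<and> x = 1 then {2, 4}
      else if q = 2 \<and> x = 0 then {}
      else if q \<in> {1, 2} then {pair_step q x}
      else {block_step q x})"

definition upw_prio :: "nat \<Rightarrow> nat" where
  "upw_prio q = (if q = 1 then 2 else if q \<in> {6, 7} then 0 else 1)"

definition upw :: "(nat, nat) automaton" where
  "upw = \<lparr>alph = {0, 1}, states = {0..8}, init = {0}, trans = upw_trans\<rparr>"

abbreviation block_run :: "(nat \<Rightarrow> nat) \<Rightarrow> nat \<Rightarrow> nat" where
  "block_run \<equiv> det_run block_step 0"

abbreviation pair_run :: "(nat \<Rightarrow> nat) \<Rightarrow> nat \<Rightarrow> nat" where
  "pair_run \<equiv> det_run pair_step 0"

lemma is_word_upw: "is_word upw w \<longleftrightarrow> (\<forall>i. w i = 0 \<or> w i = 1)"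
  by (auto simp: is_word_def upw_def)

lemma is_word_upw_letter: "is_word upw w \<Longrightarrow> w i = 0 \<or> w i = 1"
  by (simp add: is_word_upw)

lemma is_run_upw: "is_run upw w r \<longleftrightarrow> r 0 = 0 \<and> (\<forall>i. r (Suc i) \<in> upw_trans (r i) (w i))"
  by (simp add: is_run_def upw_def)

lemma block_step_range: "block_step q x \<in> {3..8}"
  by (simp add: block_step_def)

lemma pair_step_range: "pair_step q x \<in> {1, 2}"
  by (simp add: pair_step_def)

lemma upw_trans_range: "upw_trans q x \<subseteq> {0..8}"
  using block_step_range[of q x] pair_step_range[of q x] by (auto simp: upw_trans_def)

lemma block_run_Suc_range: "block_run w (Suc i) \<in> {3..8}"
  using block_step_range by simp

lemma block_run_ne_1: "block_run w i \<noteq> 1"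
  using block_run_Suc_range[of w "i - 1"] by (cases i) auto

lemma upw_trans_block_run:
  assumes "0 < i \<or> w 0 = 0"
  shows "upw_trans (block_run w i) (w i) = {block_run w (Suc i)}"
proof (cases i)
  case (Suc j)
  then show ?thesis
    using block_run_Suc_range[of w j] by (auto simp: upw_trans_def)
qed (use assms in \<open>simp add: upw_trans_def block_step_def\<close>)

lemma is_run_block_run: "is_run upw w (block_run w)"
proof -
  have "block_run w (Suc i) \<in> upw_trans (block_run w i) (w i)" for i
    using upw_trans_block_run[of i w] by (cases i) (auto simp: upw_trans_def block_step_def)
  then show ?thesis
    by (simp add: is_run_upw)
qed

lemma upw_trans_pair_run:
  assumes "0 < i"
  shows "upw_trans (pair_run w i) (w i) \<subseteq> {pair_run w (Suc i)}"
  using assms pair_step_range[of "pair_run w (i - 1)" "w (i - 1)"]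
  by (cases i) (auto simp: upw_trans_def)

lemma is_run_pair_run:
  assumes "w 0 = 1" and alive: "\<And>i. pair_run w i = 2 \<Longrightarrow> w i = 1"
  shows "is_run upw w (pair_run w)"
proof -
  have "pair_run w (Suc i) \<in> upw_trans (pair_run w i) (w i)" for i
  proof (cases i)
    case (Suc j)
    then show ?thesis
      using alive[of i] pair_step_range[of "pair_run w j" "w j"] by (auto simp: upw_trans_def)
  qed (use assms in \<open>simp add: upw_trans_def pair_step_def\<close>)
  then show ?thesis
    by (simp add: is_run_upw)
qed

lemma run_upw_cases:
  assumes "is_run upw w r"
  shows "r = block_run w \<or> (w 0 = 1 \<and> r = pair_run w)"
proof -
  from assms have r0: "r 0 = 0" and step: "\<And>i. r (Suc i) \<in> upw_trans (r i) (w i)"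
    by (simp_all add: is_run_upw)
  have r1: "r 1 \<in> upw_trans 0 (w 0)"
    using step[of 0] r0 by simp
  show ?thesis
  proof (cases "w 0 = 1 \<and> r 1 = 2")
    case True
    have functional: "upw_trans (pair_run w i) (w i) \<subseteq> {pair_run w (Suc i)}" if "1 \<le> i" for i
      using upw_trans_pair_run that by simp
    have "r n = pair_run w n" if "1 \<le> n" for n
      by (rule run_determined_from[where r' = r and r = "pair_run w" and \<delta> = upw_trans and w = w,
            OF step _ functional that])
        (use True in \<open>simp add: pair_step_def\<close>)
    then have "r n = pair_run w n" for n
      using r0 by (cases n) auto
    with True show ?thesis by auto
  next
    case False
    then have "r 1 = block_run w 1"
      using r1 by (auto simp: upw_trans_def block_step_def split: if_splits)
    have functional: "upw_trans (block_run w i) (w i) \<subseteq> {block_run w (Suc i)}" if "1 \<le> i" for i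
      using upw_trans_block_run that by simp
    have "r n = block_run w n" if "1 \<le> n" for n
      by (rule run_determined_from[where r' = r and r = "block_run w" and \<delta> = upw_trans and w = w,
            OF step \<open>r 1 = block_run w 1\<close> functional that])
    then have "r n = block_run w n" for n
      using r0 by (cases n) auto
    then show ?thesis by auto
  qed
qed

lemma parity_acc_upw_prio_iff:
  "parity_acc upw_prio r \<longleftrightarrow>
     inf_visited r 6 \<or> inf_visited r 7 \<or> (inf_visited r 1 \<and> (\<forall>q. inf_visited r q \<longrightarrow> q = 1))"
proof
  assume "parity_acc upw_prio r"
  then obtain q where q: "inf_visited r q" "even (upw_prio q)" "\<And>q'. inf_visited r q' \<Longrightarrow> upw_prio q \<le> upw_prio q'"
    unfolding parity_acc_def by blast
  from q(2) consider "q = 1" | "q = 6" | "q = 7"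
    unfolding upw_prio_def by (auto split: if_splits)
  then show "inf_visited r 6 \<or> inf_visited r 7 \<or> (inf_visited r 1 \<and> (\<forall>q. inf_visited r q \<longrightarrow> q = 1))"
  proof cases
    case 1
    have "q' = 1" if "inf_visited r q'" for q'
      using q(3)[OF that] 1 unfolding upw_prio_def by (auto split: if_splits)
    with q(1) 1 show ?thesis by blast
  qed (use q(1) in auto)
next
  assume "inf_visited r 6 \<or> inf_visited r 7 \<or> (inf_visited r 1 \<and> (\<forall>q. inf_visited r q \<longrightarrow> q = 1))"
  then show "parity_acc upw_prio r"
  proof (elim disjE conjE)
    assume "inf_visited r 1" and only_1: "\<forall>q. inf_visited r q \<longrightarrow> q = 1"
    have "upw_prio 1 \<le> upw_prio q" if "inf_visited r q" for q
      using only_1 that by blast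
    with \<open>inf_visited r 1\<close> show ?thesis
      unfolding parity_acc_def by (intro exI[of _ 1]) (simp add: upw_prio_def)
  qed (simp_all add: parity_acc_if_inf_visited_zero upw_prio_def)
qed

lemma parity_acc_block_run_iff:
  "parity_acc upw_prio (block_run w) \<longleftrightarrow> inf_visited (block_run w) 6 \<or> inf_visited (block_run w) 7"
proof -
  have "\<not> inf_visited (block_run w) 1"
    using inf_visited_imp_visited[of "block_run w" 1] block_run_ne_1[of w] by blast
  then show ?thesis
    unfolding parity_acc_upw_prio_iff by blast
qed

lemma INFM_0_if_block_run_accepts:
  assumes "parity_acc upw_prio (block_run w)"
  shows "\<exists>\<^sub>\<infinity>i. w i = 0"
proof -
  have "\<exists>\<^sub>\<infinity>i. block_run w i \<in> {6, 7}"
    using assms by (simp add: parity_acc_block_run_iff inf_visited_def INFM_disj_distrib)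
  then show ?thesis
    by (rule frequently_det_run_entry[where Q = "\<lambda>q. q \<in> {6, 7}" and P = "\<lambda>_ a. a = 0"])
      (auto simp: block_step_def split: if_splits)
qed

lemma block_run_rejects_if_eventually_0:
  assumes "\<forall>\<^sub>\<infinity>i. w i = 0" and "\<not> inf_visited (block_run w) 7"
  shows "\<not> parity_acc upw_prio (block_run w)"
proof
  assume "parity_acc upw_prio (block_run w)"
  with assms(2) have "\<exists>\<^sub>\<infinity>i. block_run w i = 6"
    unfolding parity_acc_block_run_iff inf_visited_def by blast
  then have "\<exists>\<^sub>\<infinity>i. block_run w i = 5"
    by (rule frequently_det_run_entry[where Q = "\<lambda>q. q = 6" and P = "\<lambda>p _. p = 5"])
      (auto simp: block_step_def split: if_splits)
  then have "\<exists>\<^sub>\<infinity>i. w i \<noteq> 0"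
    by (rule frequently_det_run_entry[where Q = "\<lambda>q. q = 5" and P = "\<lambda>_ a. a \<noteq> 0"])
      (auto simp: block_step_def split: if_splits)
  with assms(1) show False
    using not_MOST[of "\<lambda>i. w i = 0"] by blast
qed

lemma parity_acc_pair_run_iff:
  assumes word: "is_word upw w"
  shows "parity_acc upw_prio (pair_run w) \<longleftrightarrow> (\<forall>\<^sub>\<infinity>i. w i = 0)"
proof
  assume acc: "parity_acc upw_prio (pair_run w)"
  have range: "pair_run w i \<in> {0, 1, 2}" for i
    using pair_step_range[of "pair_run w (i - 1)" "w (i - 1)"] by (cases i) auto
  have never: "\<not> inf_visited (pair_run w) q" if "q \<notin> {0, 1, 2}" for q
    using inf_visited_imp_visited[of "pair_run w" q] range that by blast
  from acc never[of 6] never[of 7]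
  have "\<forall>q. inf_visited (pair_run w) q \<longrightarrow> q = 1"
    unfolding parity_acc_upw_prio_iff by simp
  then have "inf_visited (pair_run w) 2 \<longrightarrow> (2::nat) = 1"
    by (rule spec)
  then have "\<not> inf_visited (pair_run w) 2"
    by simp
  then have "\<forall>\<^sub>\<infinity>i. pair_run w i \<noteq> 2"
    by (simp add: inf_visited_def)
  moreover have "\<forall>\<^sub>\<infinity>i. pair_run w i \<noteq> 0"
    by (rule MOST_SucD[of "\<lambda>i. pair_run w i \<noteq> 0"]) (simp add: pair_step_def)
  ultimately have "\<forall>\<^sub>\<infinity>i. pair_run w i \<noteq> 2 \<and> pair_run w i \<noteq> 0"
    by (rule eventually_conj)
  then have eventually_1: "\<forall>\<^sub>\<infinity>i. pair_run w i = 1"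
  proof (rule MOST_mono)
    fix i
    show "pair_run w i \<noteq> 2 \<and> pair_run w i \<noteq> 0 \<Longrightarrow> pair_run w i = 1"
      using range[of i] by auto
  qed
  have "\<forall>\<^sub>\<infinity>i. pair_run w i = 1 \<and> pair_run w (Suc i) = 1"
    using eventually_1 MOST_SucI[OF eventually_1] by (rule eventually_conj)
  then show "\<forall>\<^sub>\<infinity>i. w i = 0"
    by (rule MOST_mono) (use word in \<open>auto simp: is_word_upw pair_step_def\<close>)
next
  assume "\<forall>\<^sub>\<infinity>i. w i = 0"
  then have "\<forall>\<^sub>\<infinity>i. pair_run w (Suc i) = 1"
    by (rule MOST_mono) (simp add: pair_step_def)
  then have "\<forall>\<^sub>\<infinity>i. pair_run w i = 1"
    by (rule MOST_SucD[of "\<lambda>i. pair_run w i = 1"])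
  then show "parity_acc upw_prio (pair_run w)"
    by (rule parity_acc_if_eventually_const) (simp add: upw_prio_def)
qed

text \<open>States 2 and 4 both record that the current block of 1s has odd length.\<close>

lemma block_pair_step_sync:
  assumes "q \<in> {3..6}" "p = 2 \<longleftrightarrow> q = 4" "x = 0 \<or> x = 1" "p = 2 \<Longrightarrow> x = 1"
  shows "block_step q x \<in> {3..6} \<and> (pair_step p x = 2 \<longleftrightarrow> block_step q x = 4)"
  using assms by (auto simp: block_step_def pair_step_def)

lemma block_run_pair_run_sync:
  assumes word: "is_word upw w" and "w 0 = 1"
    and alive: "\<And>j. j < i \<Longrightarrow> pair_run w j = 2 \<Longrightarrow> w j = 1" and "0 < i"
  shows "block_run w i \<in> {3..6} \<and> (pair_run w i = 2 \<longleftrightarrow> block_run w i = 4)"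
  using alive \<open>0 < i\<close>
proof (induction i)
  case 0
  then show ?case by simp
next
  case (Suc i)
  show ?case
  proof (cases "i = 0")
    case True
    with \<open>w 0 = 1\<close> show ?thesis
      by (simp add: block_step_def pair_step_def)
  next
    case False
    with Suc have "block_run w i \<in> {3..6}" "pair_run w i = 2 \<longleftrightarrow> block_run w i = 4"
      by simp_all
    moreover have "w i = 0 \<or> w i = 1"
      using word by (rule is_word_upw_letter)
    moreover have "pair_run w i = 2 \<Longrightarrow> w i = 1"
      using Suc.prems(1) by simp
    ultimately show ?thesis
      using block_pair_step_sync by simp
  qed
qed

lemma block_run_rejects_if_pair_run_accepts:
  assumes word: "is_word upw w" and run: "is_run upw w (pair_run w)"
    and acc: "parity_acc upw_prio (pair_run w)"
  shows "\<not> parity_acc upw_prio (block_run w)"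
proof -
  from run have step: "pair_run w (Suc i) \<in> upw_trans (pair_run w i) (w i)" for i
    by (simp add: is_run_upw)
  have "w 0 = 1"
    using step[of 0] by (auto simp: upw_trans_def pair_step_def block_step_def split: if_splits)
  have alive: "w j = 1" if "pair_run w j = 2" for j
    using step[of j] that is_word_upw_letter[OF word, of j] by (auto simp: upw_trans_def split: if_splits)
  have "block_run w i \<noteq> 7" for i
    using block_run_pair_run_sync[OF word \<open>w 0 = 1\<close> alive, of i] by (cases i) auto
  then have "\<not> inf_visited (block_run w) 7"
    using inf_visited_imp_visited[of "block_run w" 7] by blast
  moreover have "\<forall>\<^sub>\<infinity>i. w i = 0"
    using acc parity_acc_pair_run_iff[OF word] by blast
  ultimately show ?thesis
    using block_run_rejects_if_eventually_0 by blast
qed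

lemma unambiguous_upw: "unambiguous_parity upw upw_prio"
  unfolding unambiguous_parity_def
proof
  fix w
  assume "w \<in> parity_lang upw upw_prio"
  then have word: "is_word upw w" and ex: "\<exists>r. is_run upw w r \<and> parity_acc upw_prio r"
    by (auto simp: parity_lang_def)
  have "r = r'" if "is_run upw w r" "parity_acc upw_prio r" "is_run upw w r'" "parity_acc upw_prio r'" for r r'
    using run_upw_cases[OF that(1)] run_upw_cases[OF that(3)] that
      block_run_rejects_if_pair_run_accepts[OF word]
    by metis
  with ex show "\<exists>!r. is_run upw w r \<and> parity_acc upw_prio r"
    by blast
qed

lemma block_run_stays_in_78:
  assumes "block_run w i \<in> {7, 8}" and "i \<le> j"
  shows "block_run w j \<in> {7, 8}"
  using \<open>i \<le> j\<close>
proof (induction j rule: dec_induct)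
  case (step j)
  then show ?case
    by (simp add: block_step_def)
qed (rule assms(1))

lemma block_run_avoids_78:
  assumes "\<exists>\<^sub>\<infinity>i. w i = 0" and "\<not> inf_visited (block_run w) 7"
  shows "block_run w i \<notin> {7, 8}"
proof
  assume "block_run w i \<in> {7, 8}"
  then have "\<forall>\<^sub>\<infinity>j. block_run w j \<in> {7, 8}"
    using block_run_stays_in_78 by (auto simp: MOST_nat_le)
  with assms(1) have "\<exists>\<^sub>\<infinity>j. w j = 0 \<and> block_run w j \<in> {7, 8}"
    by (rule INFM_conjI)
  then have "\<exists>\<^sub>\<infinity>j. block_run w (Suc j) = 7"
    by (rule INFM_mono) (auto simp: block_step_def)
  then have "inf_visited (block_run w) 7"
    using INFM_Suc_iff[of "\<lambda>j. block_run w j = 7"] by (simp add: inf_visited_def)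
  with assms(2) show False ..
qed

lemma eventually_0_if_block_run_rejects:
  assumes word: "is_word upw w" and "\<exists>\<^sub>\<infinity>i. w i = 0"
    and no_78: "\<And>i. block_run w i \<notin> {7, 8}" and "\<not> inf_visited (block_run w) 6"
  shows "\<forall>\<^sub>\<infinity>i. w i = 0"
proof -
  obtain M where M: "\<And>i. i > M \<Longrightarrow> block_run w i \<noteq> 6"
    using assms(4) by (auto simp: inf_visited_def MOST_nat)
  have stays_1: "w (Suc t) = 1" if "t > M" "w t = 1" for t
  proof (rule ccontr)
    assume "w (Suc t) \<noteq> 1"
    then have "w (Suc t) = 0"
      using is_word_upw_letter[OF word, of "Suc t"] by simp
    obtain q where q: "block_run w t = q" "q \<notin> {7, 8}"
      using no_78 by blast
    with \<open>w t = 1\<close> \<open>w (Suc t) = 0\<close> have "block_run w (Suc (Suc t)) \<in> {6, 7}"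
      by (auto simp: block_step_def)
    with M[of "Suc (Suc t)"] no_78[of "Suc (Suc t)"] \<open>t > M\<close> show False
      by auto
  qed
  have "w t = 0" if "t > M" for t
  proof (rule ccontr)
    assume "w t \<noteq> 0"
    then have "w t = 1"
      using is_word_upw_letter[OF word, of t] by simp
    have "w j = 1" if "t \<le> j" for j
      using that
    proof (induction j rule: dec_induct)
      case (step j)
      with \<open>t > M\<close> show ?case
        using stays_1 by simp
    qed (rule \<open>w t = 1\<close>)
    then have "\<forall>\<^sub>\<infinity>j. w j \<noteq> 0"
      unfolding MOST_nat_le by force
    with assms(2) show False
      using not_INFM[of "\<lambda>j. w j = 0"] by blast
  qed
  then show ?thesis
    by (auto simp: MOST_nat)
qed

lemma pair_run_alive_if_block_run_avoids_7:
  assumes word: "is_word upw w" and "w 0 = 1" and no_7: "\<And>i. block_run w i \<noteq> 7"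
  shows "pair_run w i = 2 \<Longrightarrow> w i = 1"
proof (induction i rule: less_induct)
  case (less i)
  have "0 < i"
    using less.prems by (cases i) auto
  with less have "block_run w i = 4"
    using block_run_pair_run_sync[OF word \<open>w 0 = 1\<close>, of i] by blast
  then have "w i \<noteq> 0"
    using no_7[of "Suc i"] by (simp add: block_step_def split: if_splits)
  then show "w i = 1"
    using is_word_upw_letter[OF word, of i] by simp
qed

lemma accepting_run_if_starts_with_1:
  assumes word: "is_word upw w" and "w 0 = 1" and "\<exists>\<^sub>\<infinity>i. w i = 0"
  shows "\<exists>r. is_run upw w r \<and> parity_acc upw_prio r"
proof (cases "parity_acc upw_prio (block_run w)")
  case True
  then show ?thesis
    using is_run_block_run by blast
next
  case False
  then have no_6: "\<not> inf_visited (block_run w) 6" and no_7: "\<not> inf_visited (block_run w) 7"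
    by (simp_all add: parity_acc_block_run_iff)
  have no_78: "block_run w i \<notin> {7, 8}" for i
    using block_run_avoids_78[OF assms(3) no_7] .
  then have alive: "pair_run w i = 2 \<Longrightarrow> w i = 1" for i
    using pair_run_alive_if_block_run_avoids_7[OF word \<open>w 0 = 1\<close>] by blast
  have "\<forall>\<^sub>\<infinity>i. w i = 0"
    using eventually_0_if_block_run_rejects[OF word assms(3) no_78 no_6] .
  then have "parity_acc upw_prio (pair_run w)"
    using parity_acc_pair_run_iff[OF word] by blast
  with is_run_pair_run[of w, OF \<open>w 0 = 1\<close> alive] show ?thesis
    by blast
qed

lemma parity_lang_upw_iff:
  "w \<in> parity_lang upw upw_prio \<longleftrightarrow>
     is_word upw w \<and> (if w 0 = 0 then parity_acc upw_prio (block_run w) else \<exists>\<^sub>\<infinity>i. w i = 0)"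
proof (cases "is_word upw w")
  case word: True
  have "(\<exists>r. is_run upw w r \<and> parity_acc upw_prio r) \<longleftrightarrow>
      (if w 0 = 0 then parity_acc upw_prio (block_run w) else \<exists>\<^sub>\<infinity>i. w i = 0)"
  proof (cases "w 0 = 0")
    case True
    then have "is_run upw w r \<longleftrightarrow> r = block_run w" for r
      using run_upw_cases[of w r] is_run_block_run[of w] True by auto
    with True show ?thesis
      by simp
  next
    case False
    then have "w 0 = 1"
      using is_word_upw_letter[OF word, of 0] by simp
    have "\<exists>\<^sub>\<infinity>i. w i = 0" if "is_run upw w r" "parity_acc upw_prio r" for r
      using run_upw_cases[OF that(1)] that(2) INFM_0_if_block_run_accepts
        parity_acc_pair_run_iff[OF word] MOST_INFM[OF infinite_UNIV_nat]
      by blast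
    with False accepting_run_if_starts_with_1[OF word \<open>w 0 = 1\<close>] show ?thesis
      by auto
  qed
  with word show ?thesis
    by (simp add: parity_lang_def)
qed (simp add: parity_lang_def)

lemma ones_in_buchi_lang_upw:
  assumes "1 \<in> F"
  shows "(\<lambda>_. 1) \<in> buchi_lang upw F"
proof -
  let ?w = "\<lambda>_. 1 :: nat"
  have pair_run_ones: "pair_run ?w (Suc i) = (if even i then 2 else 1)" for i
    by (induction i) (simp_all add: pair_step_def)
  have "\<exists>\<^sub>\<infinity>i. pair_run ?w (Suc i) = 1"
    unfolding pair_run_ones INFM_nat
  proof
    fix m :: nat
    show "\<exists>n>m. (if even n then 2 else 1) = (1::nat)"
      by (rule exI[of _ "Suc (2 * m)"]) simp
  qed
  then have "inf_visited (pair_run ?w) 1"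
    unfolding inf_visited_def using INFM_Suc_iff[of "\<lambda>i. pair_run ?w i = 1"] by blast
  moreover have "is_run upw ?w (pair_run ?w)"
    by (rule is_run_pair_run) simp_all
  ultimately show ?thesis
    using assms by (auto simp: buchi_lang_def buchi_acc_def is_word_upw)
qed

lemma zeros_in_buchi_lang_upw:
  assumes "3 \<in> F"
  shows "(\<lambda>_. 0) \<in> buchi_lang upw F"
proof -
  have "block_run (\<lambda>_. 0) (Suc i) = 3" for i
    by (induction i) (simp_all add: block_step_def)
  then have "inf_visited (block_run (\<lambda>_. 0)) 3"
    unfolding inf_visited_def using INFM_Suc_iff[of "\<lambda>i. block_run (\<lambda>_. 0) i = 3"] by simp
  with assms is_run_block_run show ?thesis
    by (auto simp: buchi_lang_def buchi_acc_def is_word_upw)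
qed

lemma zeros_notin_parity_lang_upw: "(\<lambda>_. 0) \<notin> parity_lang upw upw_prio"
proof -
  have "block_run (\<lambda>_. 0) (Suc i) = 3" for i
    by (induction i) (simp_all add: block_step_def)
  then have "block_run (\<lambda>_. 0) i \<notin> {6, 7}" for i
    by (cases i) auto
  then have "\<not> inf_visited (block_run (\<lambda>_. 0)) q" if "q \<in> {6, 7}" for q
    using inf_visited_imp_visited[of "block_run (\<lambda>_. 0)" q] that by blast
  then show ?thesis
    by (simp add: parity_lang_upw_iff parity_acc_block_run_iff)
qed

lemma runs_upw_on_110_end_in_1_3:
  assumes "is_run upw (\<lambda>i. if i < 2 then 1 else 0) r"
  shows "\<forall>\<^sub>\<infinity>i. r i \<in> {1, 3}"
proof -
  let ?w = "\<lambda>i::nat. if i < 2 then 1 else 0 :: nat"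
  have "block_run ?w i = 3" if "4 \<le> i" for i
    using that
  proof (induction i rule: dec_induct)
    case base
    show ?case by (simp add: eval_nat_numeral block_step_def)
  qed (simp add: block_step_def)
  moreover have "pair_run ?w i = 1" if "2 \<le> i" for i
    using that
  proof (induction i rule: dec_induct)
    case base
    show ?case by (simp add: eval_nat_numeral pair_step_def)
  qed (simp add: pair_step_def)
  ultimately have "r i \<in> {1, 3}" if "4 \<le> i" for i
    using run_upw_cases[OF assms] that by auto
  then show ?thesis
    unfolding MOST_nat_le by blast
qed

lemma buchi_lang_upw_ne: "buchi_lang upw F \<noteq> parity_lang upw upw_prio"
proof
  assume eq: "buchi_lang upw F = parity_lang upw upw_prio"
  consider "1 \<in> F" | "3 \<in> F" | "F \<inter> {1, 3} = {}"
    by blast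
  then show False
  proof cases
    case 1
    with eq show False
      using ones_in_buchi_lang_upw[of F] by (simp add: parity_lang_upw_iff)
  next
    case 2
    with eq show False
      using zeros_in_buchi_lang_upw[of F] zeros_notin_parity_lang_upw by simp
  next
    case 3
    let ?w = "\<lambda>i::nat. if i < 2 then 1 else 0 :: nat"
    have "\<exists>\<^sub>\<infinity>i. ?w i = 0"
      unfolding INFM_nat
    proof
      fix m :: nat
      show "\<exists>n>m. ?w n = 0"
        by (rule exI[of _ "m + 2"]) simp
    qed
    with eq have "?w \<in> buchi_lang upw F"
      by (simp add: parity_lang_upw_iff is_word_upw)
    then obtain r where "is_run upw ?w r" and "buchi_acc F r"
      by (auto simp: buchi_lang_def)
    with 3 show False
      using runs_upw_on_110_end_in_1_3 not_buchi_acc_if_eventually_in by blast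
  qed
qed

definition dbw_step :: "nat \<Rightarrow> nat \<Rightarrow> nat" where
  "dbw_step q x =
     (if q = 0 \<and> x = 1 \<or> q \<in> {9, 10} then (if x = 0 then 9 else 10) else block_step q x)"

definition dbw :: "(nat, nat) automaton" where
  "dbw = \<lparr>alph = {0, 1}, states = {0} \<union> {3..10}, init = {0}, trans = \<lambda>q x. {dbw_step q x}\<rparr>"

lemma dbw_step_range: "dbw_step q x \<in> {3..10}"
  using block_step_range[of q x] by (auto simp: dbw_step_def)

lemma dbw_run_if_starts_with_0:
  assumes "w 0 = 0"
  shows "det_run dbw_step 0 w = block_run w"
proof
  fix i
  show "det_run dbw_step 0 w i = block_run w i"
  proof (induction i)
    case (Suc i)
    have "block_run w i \<notin> {9, 10}" "block_run w i = 0 \<Longrightarrow> w i = 0"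
      using block_run_Suc_range[of w "i - 1"] assms by (cases i; simp)+
    with Suc show ?case
      by (auto simp: dbw_step_def)
  qed simp
qed

lemma dbw_run_if_starts_with_1:
  assumes "w 0 = 1"
  shows "det_run dbw_step 0 w (Suc i) = (if w i = 0 then 9 else 10)"
  using assms by (induction i) (simp_all add: dbw_step_def)

lemma buchi_acc_dbw_run_iff:
  assumes word: "is_word upw w"
  shows "buchi_acc {6, 7, 9} (det_run dbw_step 0 w) \<longleftrightarrow>
    (if w 0 = 0 then parity_acc upw_prio (block_run w) else \<exists>\<^sub>\<infinity>i. w i = 0)"
proof (cases "w 0 = 0")
  case True
  have "block_run w i \<noteq> 9" for i
    using block_run_Suc_range[of w "i - 1"] by (cases i) auto
  then have "\<not> inf_visited (block_run w) 9"
    using inf_visited_imp_visited[of "block_run w" 9] by blast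
  with True show ?thesis
    by (auto simp: buchi_acc_def dbw_run_if_starts_with_0 parity_acc_block_run_iff)
next
  case False
  then have "w 0 = 1"
    using is_word_upw_letter[OF word, of 0] by simp
  then have run_Suc: "det_run dbw_step 0 w (Suc i) = (if w i = 0 then 9 else 10)" for i
    by (rule dbw_run_if_starts_with_1)
  have "det_run dbw_step 0 w i \<notin> {6, 7}" for i
    using run_Suc[of "i - 1"] by (cases i) auto
  then have "\<not> inf_visited (det_run dbw_step 0 w) q" if "q \<in> {6, 7}" for q
    using inf_visited_imp_visited[of "det_run dbw_step 0 w" q] that by blast
  moreover have "det_run dbw_step 0 w (Suc i) = 9 \<longleftrightarrow> w i = 0" for i
    using run_Suc[of i] by simp
  then have "inf_visited (det_run dbw_step 0 w) 9 \<longleftrightarrow> (\<exists>\<^sub>\<infinity>i. w i = 0)"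
    unfolding inf_visited_def using INFM_Suc_iff[of "\<lambda>i. det_run dbw_step 0 w i = 9"] by simp
  ultimately show ?thesis
    using False by (auto simp: buchi_acc_def)
qed

lemma buchi_lang_dbw: "buchi_lang dbw {6, 7, 9} = parity_lang upw upw_prio"
proof -
  have "is_word dbw w \<longleftrightarrow> is_word upw w" for w
    by (simp add: is_word_def dbw_def upw_def)
  then show ?thesis
    using buchi_lang_det[of dbw 0 dbw_step "{6, 7, 9}"] buchi_acc_dbw_run_iff
    by (auto simp: dbw_def parity_lang_upw_iff)
qed

theorem proposition7:
  shows "\<exists>(A :: (nat, nat) automaton) (\<alpha> :: nat \<Rightarrow> nat).
           well_formed A \<and> unambiguous_parity A \<alpha> \<and>
           DBW_realizable (alph A) (parity_lang A \<alpha>) \<and>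
           \<not> (\<exists>\<alpha>'. \<alpha>' \<subseteq> states A \<and> buchi_lang A \<alpha>' = parity_lang A \<alpha>)"
proof (intro exI[of _ upw] exI[of _ upw_prio] conjI)
  show "well_formed upw"
    using upw_trans_range by (simp add: well_formed_def upw_def)
  show "unambiguous_parity upw upw_prio"
    by (rule unambiguous_upw)
  have "well_formed dbw"
    using dbw_step_range by (simp add: well_formed_def dbw_def)
  moreover have "deterministic dbw"
    by (simp add: deterministic_def dbw_def)
  ultimately show "DBW_realizable (alph upw) (parity_lang upw upw_prio)"
    unfolding DBW_realizable_def using buchi_lang_dbw
    by (intro exI[of _ dbw] exI[of _ "{6, 7, 9}"]) (auto simp: dbw_def upw_def)
  show "\<not> (\<exists>\<alpha>'. \<alpha>' \<subseteq> states upw \<and> buchi_lang upw \<alpha>' = parity_lang upw upw_prio)"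
    using buchi_lang_upw_ne by blast
qed

end
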